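(* For $n\ge3$, the number of cyclic permutations $\pi\in\mathfrak S_n$ whose one-line notation avoids $321$ and such that every cyclic rotation of the cycle form $C(\pi)$ avoids $1342$ equals $n-1$.
   Context: A permutation $\pi\in\mathfrak S_n$ is cyclic if it consists of a single $n$-cycle. For cyclic $\pi$, $C(\pi)=(1,c_2,\dots,c_n)$ with $c_2=\pi(1)$, $c_{i+1}=\pi(c_i)$; its cyclic rotations are the sequences $c_ic_{i+1}\cdots c_nc_1\cdots c_{i-1}$ (with $c_1=1$). A sequence avoids a pattern $\sigma\in\mathfrak S_m$ if no subsequence of length $m$ is in the same relative order as $\sigma$. *)

theory Defs
  imports "HOL-Combinatorics.Permutations"
begin

definition cyclic_perm :: "nat \<Rightarrow> (nat \<Rightarrow> nat) \<Rightarrow> bool" where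
  "cyclic_perm n \<pi> \<longleftrightarrow> \<pi> permutes {1..n} \<and> (\<forall>x\<in>{1..n}. \<exists>k. (\<pi> ^^ k) 1 = x)"

definition one_line :: "nat \<Rightarrow> (nat \<Rightarrow> nat) \<Rightarrow> nat list" where
  "one_line n \<pi> = map \<pi> [1..<n+1]"

definition cycle_form :: "nat \<Rightarrow> (nat \<Rightarrow> nat) \<Rightarrow> nat list" where
  "cycle_form n \<pi> = map (\<lambda>i. (\<pi> ^^ i) 1) [0..<n]"

definition contains_pattern :: "nat list \<Rightarrow> nat list \<Rightarrow> bool" where
  "contains_pattern w p \<longleftrightarrow>
     (\<exists>idx :: nat \<Rightarrow> nat. strict_mono_on {..<length p} idx \<and>
        (\<forall>a<length p. idx a < length w) \<and>
        (\<forall>a<length p. \<forall>b<length p. (w ! idx a < w ! idx b \<longleftrightarrow> p ! a < p ! b)))"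

definition avoids :: "nat list \<Rightarrow> nat list \<Rightarrow> bool" where
  "avoids w p \<longleftrightarrow> \<not> contains_pattern w p"

end

theory Submission
  imports Defs "HOL-Combinatorics.Orbits"
begin

text \<open>
  Write the cycle form as \<open>c\<^sub>0 = 1, c\<^sub>1, \<dots>\<close> and let \<open>c\<^sub>j = n\<close>. Avoiding 1342 in the cycle form
  forces every entry before \<open>n\<close> to be smaller than every entry after it, so the \<open>j\<close>
  entries preceding \<open>n\<close> are exactly \<open>1, \<dots>, j\<close>. Hence \<open>\<pi>\<close> maps the block \<open>{1..j}\<close> onto \<open>{2..j} \<union> {n}\<close>
  and the block \<open>{j+1..n}\<close> onto \<open>{1} \<union> {j+1..n-1}\<close>. Avoiding 321 in the one-line notation
  makes \<open>\<pi>\<close> increasing after the preimage of \<open>n\<close> (which is at most \<open>j\<close>) and before the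
  preimage of \<open>1\<close> (which exceeds \<open>j\<close>), so on each block \<open>\<pi>\<close> is the unique increasing
  bijection onto its image: \<open>\<pi>\<close> is the cycle \<open>(1 2 \<dots> j n n-1 \<dots> j+1)\<close>. Conversely each
  of these \<open>n - 1\<close> cycles has all the required avoidance properties.
\<close>

lemma strict_mono_on_eq_if_image_eq:
  fixes f g :: "'a::linorder \<Rightarrow> 'b::linorder"
  assumes "finite A" "strict_mono_on A f" "strict_mono_on A g" "f ` A = g ` A" "x \<in> A"
  shows "f x = g x"
proof -
  have rank: "card {b \<in> h ` A. b < h x} = card {a \<in> A. a < x}"
    if "strict_mono_on A h" for h :: "'a \<Rightarrow> 'b"
  proof -
    have "{b \<in> h ` A. b < h x} = h ` {a \<in> A. a < x}"
      using \<open>x \<in> A\<close> by (auto simp: strict_mono_on_less[OF that])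
    then show ?thesis
      using strict_mono_on_imp_inj_on[OF that] by (simp add: card_image inj_on_subset)
  qed
  have no_less: "\<not> h1 x < h2 x"
    if "strict_mono_on A h1" "strict_mono_on A h2" "h1 ` A = h2 ` A" for h1 h2 :: "'a \<Rightarrow> 'b"
  proof
    assume "h1 x < h2 x"
    then have "{b \<in> h2 ` A. b < h1 x} \<subset> {b \<in> h2 ` A. b < h2 x}"
      using that(3) \<open>x \<in> A\<close> by auto
    then have "card {b \<in> h2 ` A. b < h1 x} < card {b \<in> h2 ` A. b < h2 x}"
      using \<open>finite A\<close> by (intro psubset_card_mono) auto
    then show False
      using rank[OF that(1)] rank[OF that(2)] that(3) by simp
  qed
  have "\<not> f x < g x" and "\<not> g x < f x"
    using no_less assms(2-4) by simp_all
  then show ?thesis by simp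
qed

lemma lower_part_eq_atLeastAtMost:
  fixes A B :: "nat set"
  assumes "A \<union> B = {1..m}" and "\<forall>a\<in>A. \<forall>b\<in>B. a < b"
  shows "A = {1..card A}"
proof -
  have "finite A"
    using assms(1) by (metis finite_Un finite_atLeastAtMost)
  have down: "{1..a} \<subseteq> A" if "a \<in> A" for a
  proof
    fix x assume "x \<in> {1..a}"
    moreover have "a \<in> {1..m}"
      using that assms(1) by blast
    ultimately have "x \<in> A \<union> B"
      using assms(1) by auto
    moreover have "x \<notin> B"
      using assms(2) that \<open>x \<in> {1..a}\<close> by fastforce
    ultimately show "x \<in> A" by blast
  qed
  have "A \<subseteq> {1..card A}"
  proof
    fix a assume "a \<in> A"
    then have "card {1..a} \<le> card A"
      using down \<open>finite A\<close> by (intro card_mono)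
    moreover have "1 \<le> a"
      using \<open>a \<in> A\<close> assms(1) by auto
    ultimately show "a \<in> {1..card A}" by simp
  qed
  then show ?thesis
    using \<open>finite A\<close> by (intro card_subset_eq) auto
qed

lemma contains_321_iff:
  "contains_pattern w [3,2,1] \<longleftrightarrow>
     (\<exists>i j k. i < j \<and> j < k \<and> k < length w \<and> w ! k < w ! j \<and> w ! j < w ! i)"
proof
  assume "contains_pattern w [3,2,1]"
  then obtain idx where "strict_mono_on {..<3} idx" "\<forall>a<3. idx a < length w"
    "\<forall>a<3. \<forall>b<3. w ! idx a < w ! idx b \<longleftrightarrow> [3,2,1::nat] ! a < [3,2,1] ! b"
    unfolding contains_pattern_def by (simp add: eval_nat_numeral) blast
  then show "\<exists>i j k. i < j \<and> j < k \<and> k < length w \<and> w ! k < w ! j \<and> w ! j < w ! i"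
    by (intro exI[of _ "idx 0"] exI[of _ "idx 1"] exI[of _ "idx 2"])
      (auto simp: strict_mono_on_def numeral_eq_Suc)
next
  assume "\<exists>i j k. i < j \<and> j < k \<and> k < length w \<and> w ! k < w ! j \<and> w ! j < w ! i"
  then obtain i j k where "i < j" "j < k" "k < length w" "w ! k < w ! j" "w ! j < w ! i"
    by blast
  then show "contains_pattern w [3,2,1]"
    unfolding contains_pattern_def
    by (intro exI[of _ "(!) [i,j,k]"]) (auto simp: strict_mono_on_def less_Suc_eq numeral_eq_Suc)
qed

lemma contains_1342_iff:
  "contains_pattern w [1,3,4,2] \<longleftrightarrow>
     (\<exists>i j k l. i < j \<and> j < k \<and> k < l \<and> l < length w \<and>
        w ! i < w ! l \<and> w ! l < w ! j \<and> w ! j < w ! k)"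
proof
  assume "contains_pattern w [1,3,4,2]"
  then obtain idx where "strict_mono_on {..<4} idx" "\<forall>a<4. idx a < length w"
    "\<forall>a<4. \<forall>b<4. w ! idx a < w ! idx b \<longleftrightarrow> [1,3,4,2::nat] ! a < [1,3,4,2] ! b"
    unfolding contains_pattern_def by (simp add: eval_nat_numeral) blast
  then show "\<exists>i j k l. i < j \<and> j < k \<and> k < l \<and> l < length w \<and>
        w ! i < w ! l \<and> w ! l < w ! j \<and> w ! j < w ! k"
    by (intro exI[of _ "idx 0"] exI[of _ "idx 1"] exI[of _ "idx 2"] exI[of _ "idx 3"])
      (auto simp: strict_mono_on_def numeral_eq_Suc)
next
  assume "\<exists>i j k l. i < j \<and> j < k \<and> k < l \<and> l < length w \<and>
        w ! i < w ! l \<and> w ! l < w ! j \<and> w ! j < w ! k"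
  then obtain i j k l where "i < j" "j < k" "k < l" "l < length w"
    "w ! i < w ! l" "w ! l < w ! j" "w ! j < w ! k"
    by blast
  then show "contains_pattern w [1,3,4,2]"
    unfolding contains_pattern_def
    by (intro exI[of _ "(!) [i,j,k,l]"]) (auto simp: strict_mono_on_def less_Suc_eq numeral_eq_Suc)
qed

lemma length_one_line [simp]: "length (one_line n \<pi>) = n"
  by (simp add: one_line_def)

lemma nth_one_line: "t < n \<Longrightarrow> one_line n \<pi> ! t = \<pi> (Suc t)"
  by (simp add: one_line_def del: upt_Suc)

lemma length_cycle_form [simp]: "length (cycle_form n \<pi>) = n"
  by (simp add: cycle_form_def)

lemma nth_cycle_form: "m < n \<Longrightarrow> cycle_form n \<pi> ! m = (\<pi> ^^ m) 1"
  by (simp add: cycle_form_def)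

lemma one_line_contains_321_iff:
  "contains_pattern (one_line n \<pi>) [3,2,1] \<longleftrightarrow>
     (\<exists>x y z. 1 \<le> x \<and> x < y \<and> y < z \<and> z \<le> n \<and> \<pi> z < \<pi> y \<and> \<pi> y < \<pi> x)"
  unfolding contains_321_iff
proof
  assume "\<exists>i j k. i < j \<and> j < k \<and> k < length (one_line n \<pi>) \<and>
    one_line n \<pi> ! k < one_line n \<pi> ! j \<and> one_line n \<pi> ! j < one_line n \<pi> ! i"
  then obtain i j k where "i < j" "j < k" "k < n"
    "one_line n \<pi> ! k < one_line n \<pi> ! j" "one_line n \<pi> ! j < one_line n \<pi> ! i"
    by auto
  then show "\<exists>x y z. 1 \<le> x \<and> x < y \<and> y < z \<and> z \<le> n \<and> \<pi> z < \<pi> y \<and> \<pi> y < \<pi> x"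
    by (intro exI[of _ "Suc i"] exI[of _ "Suc j"] exI[of _ "Suc k"]) (simp add: nth_one_line)
next
  assume "\<exists>x y z. 1 \<le> x \<and> x < y \<and> y < z \<and> z \<le> n \<and> \<pi> z < \<pi> y \<and> \<pi> y < \<pi> x"
  then obtain x y z where "1 \<le> x" "x < y" "y < z" "z \<le> n" "\<pi> z < \<pi> y" "\<pi> y < \<pi> x"
    by blast
  moreover have "one_line n \<pi> ! (t - 1) = \<pi> t" if "1 \<le> t" "t \<le> n" for t
    using that nth_one_line[of "t - 1" n \<pi>] by simp
  ultimately show "\<exists>i j k. i < j \<and> j < k \<and> k < length (one_line n \<pi>) \<and>
    one_line n \<pi> ! k < one_line n \<pi> ! j \<and> one_line n \<pi> ! j < one_line n \<pi> ! i"
    by (intro exI[of _ "x - 1"] exI[of _ "y - 1"] exI[of _ "z - 1"]) auto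
qed

lemma one_line_avoids_321I:
  assumes "strict_mono_on {1..k} \<pi>" and "strict_mono_on {k<..n} \<pi>"
  shows "avoids (one_line n \<pi>) [3,2,1]"
  unfolding avoids_def one_line_contains_321_iff
proof (intro notI, elim exE conjE)
  fix x y z assume "1 \<le> x" "x < y" "y < z" "z \<le> n" "\<pi> z < \<pi> y" "\<pi> y < \<pi> x"
  show False
  proof (cases "y \<le> k")
    case True
    have "\<pi> x < \<pi> y"
      by (rule strict_mono_onD[OF assms(1)]) (use True \<open>1 \<le> x\<close> \<open>x < y\<close> in auto)
    with \<open>\<pi> y < \<pi> x\<close> show False by simp
  next
    case False
    have "\<pi> y < \<pi> z"
      by (rule strict_mono_onD[OF assms(2)]) (use False \<open>y < z\<close> \<open>z \<le> n\<close> in auto)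
    with \<open>\<pi> z < \<pi> y\<close> show False by simp
  qed
qed

lemma strict_mono_on_after_max_if_avoids_321:
  assumes perm: "\<pi> permutes {1..n}" and avoid: "avoids (one_line n \<pi>) [3,2,1]"
    and "1 \<le> q" and max: "\<pi> q = n"
  shows "strict_mono_on {q<..n} \<pi>"
proof (rule strict_mono_onI)
  fix x y assume x: "x \<in> {q<..n}" and y: "y \<in> {q<..n}" and "x < y"
  have "\<pi> x \<noteq> \<pi> y" "\<pi> x \<noteq> \<pi> q"
    using \<open>x < y\<close> x by (auto simp: permutes_inj[OF perm, THEN inj_eq])
  moreover have "\<pi> x \<in> {1..n}"
    by (rule permutes_in_image[OF perm, THEN iffD2]) (use x \<open>1 \<le> q\<close> in auto)
  ultimately have "\<pi> x < \<pi> q"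
    using max by auto
  show "\<pi> x < \<pi> y"
  proof (rule ccontr)
    assume "\<not> \<pi> x < \<pi> y"
    with \<open>\<pi> x \<noteq> \<pi> y\<close> have "\<pi> y < \<pi> x" by simp
    then have "contains_pattern (one_line n \<pi>) [3,2,1]"
      unfolding one_line_contains_321_iff
      using \<open>1 \<le> q\<close> \<open>x < y\<close> x y \<open>\<pi> x < \<pi> q\<close> by (intro exI[of _ q] exI[of _ x] exI[of _ y]) auto
    with avoid show False by (simp add: avoids_def)
  qed
qed

lemma strict_mono_on_before_min_if_avoids_321:
  assumes perm: "\<pi> permutes {1..n}" and avoid: "avoids (one_line n \<pi>) [3,2,1]"
    and "p \<le> n" and min: "\<pi> p = 1"
  shows "strict_mono_on {1..<p} \<pi>"
proof (rule strict_mono_onI)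
  fix x y assume x: "x \<in> {1..<p}" and y: "y \<in> {1..<p}" and "x < y"
  have "\<pi> x \<noteq> \<pi> y" "\<pi> y \<noteq> \<pi> p"
    using \<open>x < y\<close> y by (auto simp: permutes_inj[OF perm, THEN inj_eq])
  moreover have "\<pi> y \<in> {1..n}"
    by (rule permutes_in_image[OF perm, THEN iffD2]) (use y \<open>p \<le> n\<close> in auto)
  ultimately have "\<pi> p < \<pi> y"
    using min by auto
  show "\<pi> x < \<pi> y"
  proof (rule ccontr)
    assume "\<not> \<pi> x < \<pi> y"
    with \<open>\<pi> x \<noteq> \<pi> y\<close> have "\<pi> y < \<pi> x" by simp
    then have "contains_pattern (one_line n \<pi>) [3,2,1]"
      unfolding one_line_contains_321_iff
      using \<open>p \<le> n\<close> \<open>x < y\<close> x y \<open>\<pi> p < \<pi> y\<close> by (intro exI[of _ x] exI[of _ y] exI[of _ p]) auto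
    with avoid show False by (simp add: avoids_def)
  qed
qed

lemma cyclic_perm_iterates:
  assumes "cyclic_perm n \<pi>" and "1 \<le> n"
  shows "bij_betw (\<lambda>m. (\<pi> ^^ m) 1) {0..<n} {1..n}" and "(\<pi> ^^ n) 1 = 1"
proof -
  have perm: "\<pi> permutes {1..n}"
    using assms(1) by (simp add: cyclic_perm_def)
  then have "permutation \<pi>"
    by (rule permutes_imp_permutation[rotated]) simp
  have orbit: "orbit \<pi> 1 = {1..n}"
  proof
    show "orbit \<pi> 1 \<subseteq> {1..n}"
      using perm assms(2) by (intro permutes_orbit_subset) auto
    show "{1..n} \<subseteq> orbit \<pi> 1"
      using assms(1) by (auto simp: cyclic_perm_def orbit_altdef_permutation[OF \<open>permutation \<pi>\<close>])
  qed
  define d where "d = funpow_dist1 \<pi> 1 1"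
  have "1 \<in> orbit \<pi> 1"
    using orbit assms(2) by simp
  then have img: "orbit \<pi> 1 = (\<lambda>m. (\<pi> ^^ m) 1) ` {0..<d}"
    and inj: "inj_on (\<lambda>m. (\<pi> ^^ m) 1) {0..<d}" and return: "(\<pi> ^^ d) 1 = 1"
    unfolding d_def by (rule orbit_conv_funpow_dist1 inj_on_funpow_dist1 funpow_dist1_prop)+
  have "d = card (orbit \<pi> 1)"
    using img inj by (simp add: card_image)
  with orbit have "d = n" by simp
  then show "bij_betw (\<lambda>m. (\<pi> ^^ m) 1) {0..<n} {1..n}" and "(\<pi> ^^ n) 1 = 1"
    using img inj orbit return by (simp_all add: bij_betw_def)
qed

text \<open>The cycle \<open>(1 2 \<dots> k n n-1 \<dots> k+1)\<close>, in one-line notation \<open>2 3 \<dots> k n 1 k+1 \<dots> n-1\<close>.\<close>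

definition unimodal_cycle :: "nat \<Rightarrow> nat \<Rightarrow> nat \<Rightarrow> nat" where
  "unimodal_cycle n k i =
     (if i < 1 \<or> n < i then i else if i < k then i + 1 else if i = k then n
      else if i = k + 1 then 1 else i - 1)"

lemma unimodal_cycle_outside: "i \<notin> {1..n} \<Longrightarrow> unimodal_cycle n k i = i"
  by (auto simp: unimodal_cycle_def)

lemma strict_mono_on_unimodal_cycle_lower: "k < n \<Longrightarrow> strict_mono_on {1..k} (unimodal_cycle n k)"
  by (auto simp: strict_mono_on_def unimodal_cycle_def)

lemma strict_mono_on_unimodal_cycle_upper: "1 \<le> k \<Longrightarrow> strict_mono_on {k<..n} (unimodal_cycle n k)"
  by (auto simp: strict_mono_on_def unimodal_cycle_def)

lemma unimodal_cycle_image_lower: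
  assumes "1 \<le> k" "k < n"
  shows "unimodal_cycle n k ` {1..k} = insert n {2..k}"
proof -
  have "{1..k} = insert k {1..<k}"
    using assms by auto
  then have "unimodal_cycle n k ` {1..k} = insert (unimodal_cycle n k k) (unimodal_cycle n k ` {1..<k})"
    by (simp only: image_insert)
  also have "unimodal_cycle n k k = n"
    using assms by (simp add: unimodal_cycle_def)
  also have "unimodal_cycle n k ` {1..<k} = Suc ` {1..<k}"
    using assms by (intro image_cong) (auto simp: unimodal_cycle_def)
  finally show ?thesis
    by (simp add: atLeastLessThanSuc_atLeastAtMost numeral_2_eq_2)
qed

lemma unimodal_cycle_image_upper:
  assumes "k < n"
  shows "unimodal_cycle n k ` {k<..n} = insert 1 {k<..<n}"
proof -
  have "{k<..n} = insert (Suc k) {Suc (Suc k)..n}"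
    using assms by auto
  then have "unimodal_cycle n k ` {k<..n} =
      insert (unimodal_cycle n k (Suc k)) (unimodal_cycle n k ` {Suc (Suc k)..n})"
    by (simp only: image_insert)
  also have "unimodal_cycle n k (Suc k) = 1"
    using assms by (simp add: unimodal_cycle_def)
  also have "unimodal_cycle n k ` {Suc (Suc k)..n} = (\<lambda>i. i - 1) ` {Suc (Suc k)..n}"
    by (intro image_cong) (auto simp: unimodal_cycle_def)
  also have "\<dots> = {k<..<n}"
  proof
    show "{k<..<n} \<subseteq> (\<lambda>i. i - 1) ` {Suc (Suc k)..n}"
    proof
      fix x assume "x \<in> {k<..<n}"
      then show "x \<in> (\<lambda>i. i - 1) ` {Suc (Suc k)..n}"
        by (intro image_eqI[of _ _ "Suc x"]) auto
    qed
  qed auto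
  finally show ?thesis .
qed

lemma unimodal_cycle_permutes:
  assumes "1 \<le> k" "k < n"
  shows "unimodal_cycle n k permutes {1..n}"
proof (rule bij_imp_permutes)
  have "{1..n} = {1..k} \<union> {k<..n}"
    using assms by auto
  then have "unimodal_cycle n k ` {1..n} = unimodal_cycle n k ` {1..k} \<union> unimodal_cycle n k ` {k<..n}"
    by (simp only: image_Un)
  also have "\<dots> = insert n {2..k} \<union> insert 1 {k<..<n}"
    using assms by (simp only: unimodal_cycle_image_lower unimodal_cycle_image_upper)
  also have "\<dots> = {1..n}"
    using assms by auto
  finally have surj: "unimodal_cycle n k ` {1..n} = {1..n}" .
  then have "inj_on (unimodal_cycle n k) {1..n}"
    by (intro eq_card_imp_inj_on) simp_all
  with surj show "bij_betw (unimodal_cycle n k) {1..n} {1..n}"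
    by (simp add: bij_betw_def)
qed (rule unimodal_cycle_outside)

lemma unimodal_cycle_iterate:
  assumes "1 \<le> k" "k < n" "m < n"
  shows "(unimodal_cycle n k ^^ m) 1 = (if m < k then m + 1 else n + k - m)"
  using assms(3)
proof (induction m)
  case 0
  then show ?case using assms by simp
next
  case (Suc m)
  then show ?case using assms by (auto simp: unimodal_cycle_def)
qed

lemma cyclic_perm_unimodal_cycle:
  assumes "1 \<le> k" "k < n"
  shows "cyclic_perm n (unimodal_cycle n k)"
  unfolding cyclic_perm_def
proof (intro conjI ballI)
  show "unimodal_cycle n k permutes {1..n}"
    using assms by (rule unimodal_cycle_permutes)
  fix x assume "x \<in> {1..n}"
  then show "\<exists>m. (unimodal_cycle n k ^^ m) 1 = x"
    using assms unimodal_cycle_iterate[OF assms, of "x - 1"] unimodal_cycle_iterate[OF assms, of "n + k - x"]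
    by (cases "x \<le> k") (auto intro: exI[of _ "x - 1"] exI[of _ "n + k - x"])
qed

lemma one_line_unimodal_cycle_avoids_321:
  assumes "1 \<le> k" "k < n"
  shows "avoids (one_line n (unimodal_cycle n k)) [3,2,1]"
  using strict_mono_on_unimodal_cycle_lower[OF assms(2)] strict_mono_on_unimodal_cycle_upper[OF assms(1)]
  by (rule one_line_avoids_321I)

lemma rotate_cycle_form_unimodal_cycle_avoids_1342:
  assumes "1 \<le> k" "k < n"
  shows "avoids (rotate i (cycle_form n (unimodal_cycle n k))) [1,3,4,2]"
proof -
  define r where "r = i mod n"
  define w where "w = rotate i (cycle_form n (unimodal_cycle n k))"
  define e where "e m = (if m < k then m + 1 else n + k - m)" for m
  define p where "p t = (if r + t < n then r + t else r + t - n)" for t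
  have "r < n"
    using assms by (simp add: r_def)
  have entry: "w ! t = e (p t)" if "t < n" for t
  proof -
    have "(i + t) mod n = (r + t) mod n"
      by (simp add: r_def mod_add_left_eq)
    also have "\<dots> = p t"
      using \<open>r < n\<close> that by (auto simp: p_def le_mod_geq)
    finally have "(i + t) mod n = p t" .
    moreover have "p t < n"
      using \<open>r < n\<close> that by (auto simp: p_def)
    ultimately show ?thesis
      using that unimodal_cycle_iterate[OF assms \<open>p t < n\<close>]
      by (simp add: w_def e_def nth_rotate nth_cycle_form)
  qed
  show ?thesis
    unfolding avoids_def contains_1342_iff w_def[symmetric]
  proof (intro notI, elim exE conjE)
    fix t0 t1 t2 t3
    assume "t0 < t1" "t1 < t2" "t2 < t3" "t3 < length w"
      and "w ! t0 < w ! t3" "w ! t3 < w ! t1" "w ! t1 < w ! t2"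
    moreover have "t3 < n"
      using \<open>t3 < length w\<close> by (simp add: w_def)
    ultimately have "e (p t0) < e (p t3)" "e (p t3) < e (p t1)" "e (p t1) < e (p t2)"
      using entry[of t0] entry[of t1] entry[of t2] entry[of t3] by simp_all
    \<comment> \<open>Each entry lies before or after the wrap-around point and on the increasing
      or the decreasing run; linear arithmetic refutes every combination.\<close>
    with \<open>t0 < t1\<close> \<open>t1 < t2\<close> \<open>t2 < t3\<close> \<open>t3 < n\<close> \<open>r < n\<close> assms show False
      unfolding e_def p_def by (auto split: if_splits)
  qed
qed

lemma inj_on_unimodal_cycle: "inj_on (unimodal_cycle n) {1..<n}"
proof (rule inj_onI)
  fix k k' assume k: "k \<in> {1..<n}" and k': "k' \<in> {1..<n}"
    and eq: "unimodal_cycle n k = unimodal_cycle n k'"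
  have "unimodal_cycle n k' k = n"
    using k by (simp add: eq[symmetric] unimodal_cycle_def)
  then show "k = k'"
    using k k' by (auto simp: unimodal_cycle_def split: if_splits)
qed

lemma cycle_values_before_max_if_avoids_1342:
  assumes cyclic: "cyclic_perm n \<pi>" and avoid: "avoids (cycle_form n \<pi>) [1,3,4,2]"
    and "j < n" and max: "(\<pi> ^^ j) 1 = n"
  shows "(\<lambda>m. (\<pi> ^^ m) 1) ` {0..<j} = {1..j}"
proof -
  define c where "c = (\<lambda>m. (\<pi> ^^ m) 1)"
  have inj: "inj_on c {0..<n}" and img: "c ` {0..<n} = {1..n}"
    using cyclic_perm_iterates(1)[OF cyclic] \<open>j < n\<close> by (simp_all add: c_def bij_betw_def)
  have "c j = n" "c 0 = 1"
    using max by (simp_all add: c_def)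
  have before_less_after: "c a < c d" if "a < j" "j < d" "d < n" for a d
  proof (rule ccontr)
    assume "\<not> c a < c d"
    have "c a \<in> {1..n}" "c d \<in> {1..n}"
      using img that \<open>j < n\<close> by auto
    moreover have "c a \<noteq> c d" "c a \<noteq> c j" "c d \<noteq> c 0"
      using that \<open>j < n\<close> by (auto simp: inj_on_eq_iff[OF inj])
    ultimately have "c 0 < c d" "c d < c a" "c a < c j"
      using \<open>\<not> c a < c d\<close> \<open>c j = n\<close> \<open>c 0 = 1\<close> by auto
    moreover have "a \<noteq> 0"
      using \<open>c 0 < c d\<close> \<open>c d < c a\<close> by (cases "a = 0") auto
    ultimately have "contains_pattern (cycle_form n \<pi>) [1,3,4,2]"
      unfolding contains_1342_iff using that
      by (intro exI[of _ 0] exI[of _ a] exI[of _ j] exI[of _ d]) (auto simp: nth_cycle_form c_def)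
    with avoid show False
      by (simp add: avoids_def)
  qed
  have "c ` {0..<j} \<union> c ` {j<..<n} = c ` ({0..<j} \<union> {j<..<n})"
    by (rule image_Un[symmetric])
  also have "\<dots> = c ` ({0..<n} - {j})"
    using \<open>j < n\<close> by (intro arg_cong[where f = "image c"]) auto
  also have "\<dots> = {1..n} - {n}"
    using inj img \<open>j < n\<close> \<open>c j = n\<close> by (simp add: inj_on_image_set_diff)
  also have "\<dots> = {1..n - 1}"
    by auto
  finally have "c ` {0..<j} = {1..card (c ` {0..<j})}"
    by (rule lower_part_eq_atLeastAtMost) (auto intro: before_less_after)
  moreover have "card (c ` {0..<j}) = j"
    using \<open>j < n\<close> by (simp add: card_image inj_on_subset[OF inj])
  ultimately show ?thesis
    by (simp add: c_def)
qed

lemma cyclic_perm_blocks_if_cycle_values_before_max: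
  assumes cyclic: "cyclic_perm n \<pi>" and "1 \<le> j" "j < n" and max: "(\<pi> ^^ j) 1 = n"
    and before_max: "(\<lambda>m. (\<pi> ^^ m) 1) ` {0..<j} = {1..j}"
  shows "\<pi> ` {1..j} = insert n {2..j}" and "\<pi> ` {j<..n} = insert 1 {j<..<n}"
proof -
  define c where "c = (\<lambda>m. (\<pi> ^^ m) 1)"
  have inj: "inj_on c {0..<n}" and img: "c ` {0..<n} = {1..n}" and "c n = 1"
    using cyclic_perm_iterates[OF cyclic] \<open>j < n\<close> by (simp_all add: c_def bij_betw_def)
  have "c 0 = 1" "c j = n" and lower: "c ` {0..<j} = {1..j}"
    using max before_max by (simp_all add: c_def)
  have shift: "\<pi> ` c ` I = c ` Suc ` I" for I
    by (simp add: c_def image_image)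
  have "{0..j} = insert j {0..<j}"
    by auto
  then have upto_max: "c ` {0..j} = insert n {1..j}"
    using lower \<open>c j = n\<close> by (simp only: image_insert)
  have upper: "c ` {j<..<n} = {j<..<n}"
  proof -
    have "c ` {j<..<n} = c ` ({0..<n} - {0..j})"
      by (intro arg_cong[where f = "image c"]) auto
    also have "\<dots> = c ` {0..<n} - c ` {0..j}"
      using \<open>j < n\<close> by (intro inj_on_image_set_diff[OF inj]) auto
    also have "\<dots> = {1..n} - insert n {1..j}"
      using img upto_max by simp
    finally show ?thesis
      by auto
  qed
  have "\<pi> ` {1..j} = c ` {1..j}"
    using shift[of "{0..<j}"] lower by (simp add: atLeastLessThanSuc_atLeastAtMost)
  also have "\<dots> = c ` ({0..j} - {0})"
    by (intro arg_cong[where f = "image c"]) auto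
  also have "\<dots> = c ` {0..j} - c ` {0}"
    using \<open>j < n\<close> by (intro inj_on_image_set_diff[OF inj]) auto
  also have "\<dots> = insert n {2..j}"
    using upto_max \<open>c 0 = 1\<close> \<open>1 \<le> j\<close> \<open>j < n\<close> by auto
  finally show "\<pi> ` {1..j} = insert n {2..j}" .
  have "{j..<n} = insert j {j<..<n}" and "{Suc j..<Suc n} = insert n {j<..<n}"
    using \<open>j < n\<close> by auto
  then have "{j<..n} = c ` {j..<n}"
    using upper \<open>c j = n\<close> \<open>j < n\<close> by auto
  then have "\<pi> ` {j<..n} = c ` insert n {j<..<n}"
    using shift[of "{j..<n}"] \<open>{Suc j..<Suc n} = insert n {j<..<n}\<close> by simp
  then show "\<pi> ` {j<..n} = insert 1 {j<..<n}"
    using upper \<open>c n = 1\<close> by simp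
qed

lemma eq_unimodal_cycle_if_avoids_321:
  assumes perm: "\<pi> permutes {1..n}" and avoid: "avoids (one_line n \<pi>) [3,2,1]"
    and "1 \<le> j" "j < n"
    and lower: "\<pi> ` {1..j} = insert n {2..j}" and upper: "\<pi> ` {j<..n} = insert 1 {j<..<n}"
  shows "\<pi> = unimodal_cycle n j"
proof
  fix x
  obtain q where "q \<in> {1..j}" "\<pi> q = n"
    using lower by (metis imageE insertI1)
  obtain p where "p \<in> {j<..n}" "\<pi> p = 1"
    using upper by (metis imageE insertI1)
  have mono_lower: "strict_mono_on {1..j} \<pi>"
    by (rule monotone_on_subset[OF strict_mono_on_before_min_if_avoids_321[OF perm avoid _ \<open>\<pi> p = 1\<close>]])
      (use \<open>p \<in> {j<..n}\<close> in auto)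
  have mono_upper: "strict_mono_on {j<..n} \<pi>"
    by (rule monotone_on_subset[OF strict_mono_on_after_max_if_avoids_321[OF perm avoid _ \<open>\<pi> q = n\<close>]])
      (use \<open>q \<in> {1..j}\<close> in auto)
  consider "x \<in> {1..j}" | "x \<in> {j<..n}" | "x \<notin> {1..n}"
    by fastforce
  then show "\<pi> x = unimodal_cycle n j x"
  proof cases
    case 1
    then show ?thesis
      using assms mono_lower strict_mono_on_unimodal_cycle_lower unimodal_cycle_image_lower
      by (intro strict_mono_on_eq_if_image_eq[of "{1..j}"]) auto
  next
    case 2
    then show ?thesis
      using assms mono_upper strict_mono_on_unimodal_cycle_upper unimodal_cycle_image_upper
      by (intro strict_mono_on_eq_if_image_eq[of "{j<..n}"]) auto
  next
    case 3
    then show ?thesis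
      by (simp add: permutes_not_in[OF perm] unimodal_cycle_outside)
  qed
qed

lemma eq_unimodal_cycle_if_avoids:
  assumes "2 \<le> n" and cyclic: "cyclic_perm n \<pi>" and avoid: "avoids (one_line n \<pi>) [3,2,1]"
    and avoid': "avoids (cycle_form n \<pi>) [1,3,4,2]"
  obtains k where "1 \<le> k" "k < n" "\<pi> = unimodal_cycle n k"
proof -
  have "n \<in> (\<lambda>m. (\<pi> ^^ m) 1) ` {0..<n}"
    using cyclic_perm_iterates(1)[OF cyclic] assms(1) by (simp add: bij_betw_def)
  then obtain j where "j < n" and max: "(\<pi> ^^ j) 1 = n"
    by auto
  with assms(1) have "1 \<le> j"
    by (cases "j = 0") auto
  have "\<pi> ` {1..j} = insert n {2..j}" "\<pi> ` {j<..n} = insert 1 {j<..<n}"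
    using cyclic_perm_blocks_if_cycle_values_before_max[OF cyclic \<open>1 \<le> j\<close> \<open>j < n\<close> max
        cycle_values_before_max_if_avoids_1342[OF cyclic avoid' \<open>j < n\<close> max]] .
  moreover have "\<pi> permutes {1..n}"
    using cyclic by (simp add: cyclic_perm_def)
  ultimately show thesis
    using that \<open>1 \<le> j\<close> \<open>j < n\<close> avoid eq_unimodal_cycle_if_avoids_321 by blast
qed

theorem lemma3p4:
  fixes n :: nat
  assumes "n \<ge> 3"
  shows "card {\<pi>. cyclic_perm n \<pi> \<and> avoids (one_line n \<pi>) [3,2,1] \<and>
                 (\<forall>i<n. avoids (rotate i (cycle_form n \<pi>)) [1,3,4,2])} = n - 1"
proof -
  let ?S = "{\<pi>. cyclic_perm n \<pi> \<and> avoids (one_line n \<pi>) [3,2,1] \<and>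
                 (\<forall>i<n. avoids (rotate i (cycle_form n \<pi>)) [1,3,4,2])}"
  have "?S = unimodal_cycle n ` {1..<n}"
  proof (intro equalityI subsetI)
    fix \<pi> assume "\<pi> \<in> ?S"
    then have "cyclic_perm n \<pi>" "avoids (one_line n \<pi>) [3,2,1]" "avoids (cycle_form n \<pi>) [1,3,4,2]"
      using assms by (auto dest: spec[of _ 0])
    moreover have "2 \<le> n"
      using assms by simp
    ultimately show "\<pi> \<in> unimodal_cycle n ` {1..<n}"
      by (elim eq_unimodal_cycle_if_avoids) auto
  next
    fix \<pi> assume "\<pi> \<in> unimodal_cycle n ` {1..<n}"
    then obtain k where "1 \<le> k" "k < n" "\<pi> = unimodal_cycle n k"
      by auto
    then show "\<pi> \<in> ?S"
      using cyclic_perm_unimodal_cycle one_line_unimodal_cycle_avoids_321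
        rotate_cycle_form_unimodal_cycle_avoids_1342
      by simp
  qed
  then show ?thesis
    using card_image[OF inj_on_unimodal_cycle[of n]] by simp
qed

end
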